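(* Let $D$ be a finite division semialgebra over $\mathbb{Z}_\mathrm{max}$. Then $D\cong F^{(n)}$ for some positive integer $n$ (in particular $D$ is commutative).
   Context: A (possibly noncommutative) semiring is a set with two associative binary operations, addition (commutative, with identity $0$) and multiplication (with identity $1$), satisfying both distributive laws. A division semiring is a semiring in which every nonzero element has a two-sided multiplicative inverse; a semifield is a commutative division semiring. $\mathbb{Z}_\mathrm{max}=\mathbb{Z}\cup\{-\infty\}$ is the semifield with addition $\max$ and multiplication ordinary addition; writing $u$ for the integer $1$ in it, $\mathbb{Z}_\mathrm{max}=\{0\}\cup\{u^k:k\in\mathbb{Z}\}$ with $u^a+u^b=u^{\max(a,b)}$. A division semialgebra over a semifield $K$ is a division semiring $D$ together with an injective homomorphism from $K$ into the center of $D$; it is finite if $D$ is finitely generated as a left $K$-semimodule. For a positive integer $n$, $F^{(n)}$ is the semifield $\mathbb{Z}_\mathrm{max}$ regarded as an extension of $\mathbb{Z}_\mathrm{max}$ via $u^k\mapsto u^{nk}$, $0\mapsto 0$; the isomorphism is one of semialgebras over $\mathbb{Z}_\mathrm{max}$. *)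

theory Defs
  imports Main
begin

text \<open>None is the zero element (-infinity); Some k is u^k.
  Addition is max, multiplication is addition of exponents.\<close>

definition zmax_add :: "int option \<Rightarrow> int option \<Rightarrow> int option" where
  "zmax_add a b = (case a of None \<Rightarrow> b
                   | Some x \<Rightarrow> (case b of None \<Rightarrow> Some x | Some y \<Rightarrow> Some (max x y)))"

definition zmax_mul :: "int option \<Rightarrow> int option \<Rightarrow> int option" where
  "zmax_mul a b = (case a of None \<Rightarrow> None
                   | Some x \<Rightarrow> (case b of None \<Rightarrow> None | Some y \<Rightarrow> Some (x + y)))"

definition zmax_zero :: "int option" where "zmax_zero = None"
definition zmax_one :: "int option" where "zmax_one = Some 0"

text \<open>The structure map of F^(n): u^k maps to u^(nk), 0 maps to 0.\<close>
definition F_embed :: "nat \<Rightarrow> int option \<Rightarrow> int option" where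
  "F_embed n = map_option (\<lambda>k. int n * k)"

definition is_semiring ::
  "('d \<Rightarrow> 'd \<Rightarrow> 'd) \<Rightarrow> ('d \<Rightarrow> 'd \<Rightarrow> 'd) \<Rightarrow> 'd \<Rightarrow> 'd \<Rightarrow> bool" where
  "is_semiring add mul zero one \<longleftrightarrow>
     (\<forall>a b c. add (add a b) c = add a (add b c)) \<and>
     (\<forall>a b. add a b = add b a) \<and>
     (\<forall>a. add zero a = a) \<and>
     (\<forall>a b c. mul (mul a b) c = mul a (mul b c)) \<and>
     (\<forall>a. mul one a = a \<and> mul a one = a) \<and>
     (\<forall>a b c. mul a (add b c) = add (mul a b) (mul a c)) \<and>
     (\<forall>a b c. mul (add a b) c = add (mul a c) (mul b c))"

definition is_division_semiring ::
  "('d \<Rightarrow> 'd \<Rightarrow> 'd) \<Rightarrow> ('d \<Rightarrow> 'd \<Rightarrow> 'd) \<Rightarrow> 'd \<Rightarrow> 'd \<Rightarrow> bool" where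
  "is_division_semiring add mul zero one \<longleftrightarrow>
     is_semiring add mul zero one \<and>
     (\<forall>a. a \<noteq> zero \<longrightarrow> (\<exists>b. mul a b = one \<and> mul b a = one))"

definition is_semiring_hom ::
  "('a \<Rightarrow> 'a \<Rightarrow> 'a) \<Rightarrow> ('a \<Rightarrow> 'a \<Rightarrow> 'a) \<Rightarrow> 'a \<Rightarrow> 'a \<Rightarrow>
   ('b \<Rightarrow> 'b \<Rightarrow> 'b) \<Rightarrow> ('b \<Rightarrow> 'b \<Rightarrow> 'b) \<Rightarrow> 'b \<Rightarrow> 'b \<Rightarrow> ('a \<Rightarrow> 'b) \<Rightarrow> bool" where
  "is_semiring_hom add1 mul1 zero1 one1 add2 mul2 zero2 one2 f \<longleftrightarrow>
     (\<forall>a b. f (add1 a b) = add2 (f a) (f b)) \<and>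
     (\<forall>a b. f (mul1 a b) = mul2 (f a) (f b)) \<and>
     f zero1 = zero2 \<and> f one1 = one2"

definition is_zmax_division_semialgebra ::
  "('d \<Rightarrow> 'd \<Rightarrow> 'd) \<Rightarrow> ('d \<Rightarrow> 'd \<Rightarrow> 'd) \<Rightarrow> 'd \<Rightarrow> 'd \<Rightarrow> (int option \<Rightarrow> 'd) \<Rightarrow> bool" where
  "is_zmax_division_semialgebra add mul zero one phi \<longleftrightarrow>
     is_division_semiring add mul zero one \<and>
     is_semiring_hom zmax_add zmax_mul zmax_zero zmax_one add mul zero one phi \<and>
     inj phi \<and>
     (\<forall>k d. mul (phi k) d = mul d (phi k))"

text \<open>Finite: D is finitely generated as a left Z_max-semimodule
  (scalar action k . d = phi k * d).\<close>
definition is_finite_semialgebra ::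
  "('d \<Rightarrow> 'd \<Rightarrow> 'd) \<Rightarrow> ('d \<Rightarrow> 'd \<Rightarrow> 'd) \<Rightarrow> 'd \<Rightarrow> (int option \<Rightarrow> 'd) \<Rightarrow> bool" where
  "is_finite_semialgebra add mul zero phi \<longleftrightarrow>
     (\<exists>gs :: 'd list. \<forall>x. \<exists>ks :: int option list.
        length ks = length gs \<and>
        x = foldr add (map2 (\<lambda>k g. mul (phi k) g) ks gs) zero)"

end

theory Submission
  imports Defs
begin

text \<open>Addition is idempotent (already \<open>1 + 1 = 1\<close> in \<open>Z_max\<close>), so \<open>x \<preceq> y \<longleftrightarrow> x + y = y\<close>
  is a partial order compatible with multiplication, and the powers \<open>u\<^sup>k\<close> form a strictly
  increasing central chain. Writing elements as combinations of finitely many generators bounds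
  every nonzero element between \<open>u\<^sup>k\<^sup>-\<^sup>a\<close> and \<open>u\<^sup>k\<^sup>+\<^sup>b\<close> for some \<open>k\<close> (with \<open>a, b\<close>
  fixed), and makes every interval with nonzero lower end finite. Consequently every \<open>y \<prec> 1\<close>
  has a power below \<open>u\<^sup>-\<^sup>1\<close>, and this rules out elements incomparable with \<open>1\<close>. So the
  nonzero elements form a totally ordered group with finite intervals, that is, an infinite cyclic
  group generated by the least element above \<open>1\<close>, and \<open>u\<close> is a positive power \<open>n\<close> of this
  generator; this is the isomorphism with \<open>F\<^sup>(\<^sup>n\<^sup>)\<close>.\<close>

section \<open>The natural order of a division semialgebra over \<open>Z_max\<close>\<close>

locale zmax_semialgebra =
  fixes add :: "'a \<Rightarrow> 'a \<Rightarrow> 'a" (infixl "\<oplus>" 65)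
    and mul :: "'a \<Rightarrow> 'a \<Rightarrow> 'a" (infixl "\<otimes>" 70)
    and zero one :: 'a
    and phi :: "int option \<Rightarrow> 'a"
  assumes semialgebra: "is_zmax_division_semialgebra add mul zero one phi"
begin

lemma semiring: "is_semiring (\<oplus>) (\<otimes>) zero one"
  using semialgebra unfolding is_zmax_division_semialgebra_def is_division_semiring_def by blast

lemma add_assoc: "a \<oplus> b \<oplus> c = a \<oplus> (b \<oplus> c)"
  and add_commute: "a \<oplus> b = b \<oplus> a"
  and zero_add [simp]: "zero \<oplus> a = a"
  and mul_assoc: "a \<otimes> b \<otimes> c = a \<otimes> (b \<otimes> c)"
  and one_mul [simp]: "one \<otimes> a = a"
  and mul_one [simp]: "a \<otimes> one = a"
  and mul_add_distrib_left: "a \<otimes> (b \<oplus> c) = a \<otimes> b \<oplus> a \<otimes> c"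
  and mul_add_distrib_right: "(a \<oplus> b) \<otimes> c = a \<otimes> c \<oplus> b \<otimes> c"
  using semiring unfolding is_semiring_def by blast+

lemma add_zero [simp]: "a \<oplus> zero = a"
  using add_commute zero_add by metis

lemma exists_inverse: "a \<noteq> zero \<Longrightarrow> \<exists>b. a \<otimes> b = one \<and> b \<otimes> a = one"
  using semialgebra unfolding is_zmax_division_semialgebra_def is_division_semiring_def by blast

lemma phi_add: "phi (zmax_add a b) = phi a \<oplus> phi b"
  and phi_mul: "phi (zmax_mul a b) = phi a \<otimes> phi b"
  and phi_None: "phi None = zero"
  and phi_Some_0: "phi (Some 0) = one"
  using semialgebra
  unfolding is_zmax_division_semialgebra_def is_semiring_hom_def zmax_zero_def zmax_one_def
  by blast+

lemma inj_phi: "inj phi"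
  and phi_central: "phi k \<otimes> x = x \<otimes> phi k"
  using semialgebra unfolding is_zmax_division_semialgebra_def by blast+

lemma zero_not_one: "zero \<noteq> one"
  using inj_phi phi_None phi_Some_0 by (metis inj_eq option.distinct(1))

lemma add_idem [simp]: "x \<oplus> x = x"
proof -
  have "one \<oplus> one = one"
    using phi_add[of "Some 0" "Some 0"] phi_Some_0 by (simp add: zmax_add_def)
  then have "(one \<oplus> one) \<otimes> x = x" by simp
  then show ?thesis by (simp add: mul_add_distrib_right)
qed

lemma zero_mul_zero: "zero \<otimes> zero = zero"
  using phi_mul[of None None] phi_None by (simp add: zmax_mul_def)

text \<open>Absorption of zero is not among the semiring axioms; it follows because a nonzero
  product with a zero factor would be invertible and force \<open>zero = one\<close>.\<close>

lemma zero_mul [simp]: "zero \<otimes> a = zero"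
proof (rule ccontr)
  assume nz: "zero \<otimes> a \<noteq> zero"
  have "zero \<otimes> (zero \<otimes> a) = zero \<otimes> a" by (simp add: mul_assoc[symmetric] zero_mul_zero)
  moreover obtain b where "zero \<otimes> a \<otimes> b = one" using exists_inverse[OF nz] by blast
  ultimately have "zero \<otimes> one = one" by (metis mul_assoc)
  then show False using zero_not_one by simp
qed

lemma mul_zero [simp]: "a \<otimes> zero = zero"
proof (rule ccontr)
  assume nz: "a \<otimes> zero \<noteq> zero"
  have "(a \<otimes> zero) \<otimes> zero = a \<otimes> zero" by (simp add: mul_assoc zero_mul_zero)
  moreover obtain b where "b \<otimes> (a \<otimes> zero) = one" using exists_inverse[OF nz] by blast
  ultimately have "one \<otimes> zero = one" by (metis mul_assoc)
  then show False using zero_not_one by simp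
qed

definition le :: "'a \<Rightarrow> 'a \<Rightarrow> bool" (infix "\<preceq>" 50) where
  "x \<preceq> y \<longleftrightarrow> x \<oplus> y = y"

lemma le_refl [simp]: "x \<preceq> x"
  by (simp add: le_def)

lemma le_antisym: "x \<preceq> y \<Longrightarrow> y \<preceq> x \<Longrightarrow> x = y"
  by (metis le_def add_commute)

lemma le_trans [trans]: "x \<preceq> y \<Longrightarrow> y \<preceq> z \<Longrightarrow> x \<preceq> z"
  by (metis le_def add_assoc)

lemma zero_le [simp]: "zero \<preceq> x"
  by (simp add: le_def)

lemma le_zero_iff: "x \<preceq> zero \<longleftrightarrow> x = zero"
  by (simp add: le_def)

lemma le_add1: "x \<preceq> x \<oplus> y"
  by (metis le_def add_assoc add_idem)

lemma le_add2: "y \<preceq> x \<oplus> y"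
  by (metis le_add1 add_commute)

lemma add_le: "x \<preceq> z \<Longrightarrow> y \<preceq> z \<Longrightarrow> x \<oplus> y \<preceq> z"
  by (metis le_def add_assoc)

lemma add_le_iff: "x \<oplus> y \<preceq> z \<longleftrightarrow> x \<preceq> z \<and> y \<preceq> z"
  using add_le le_add1 le_add2 le_trans by blast

lemma mul_le_mul_left: "x \<preceq> y \<Longrightarrow> c \<otimes> x \<preceq> c \<otimes> y"
  by (metis le_def mul_add_distrib_left)

lemma mul_le_mul_right: "x \<preceq> y \<Longrightarrow> x \<otimes> c \<preceq> y \<otimes> c"
  by (metis le_def mul_add_distrib_right)

lemma mul_le_mul: "a \<preceq> b \<Longrightarrow> c \<preceq> d \<Longrightarrow> a \<otimes> c \<preceq> b \<otimes> d"
  by (meson mul_le_mul_left mul_le_mul_right le_trans)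

definition recip :: "'a \<Rightarrow> 'a" where
  "recip x = (SOME b. x \<otimes> b = one \<and> b \<otimes> x = one)"

lemma mul_recip [simp]: "x \<noteq> zero \<Longrightarrow> x \<otimes> recip x = one"
  and recip_mul [simp]: "x \<noteq> zero \<Longrightarrow> recip x \<otimes> x = one"
  unfolding recip_def using someI_ex[OF exists_inverse] by blast+

lemma recip_neq_zero: "x \<noteq> zero \<Longrightarrow> recip x \<noteq> zero"
  using mul_recip zero_not_one by (metis mul_zero)

lemma mul_left_cancel: "x \<noteq> zero \<Longrightarrow> x \<otimes> a = x \<otimes> b \<Longrightarrow> a = b"
  by (metis recip_mul mul_assoc one_mul)

lemma mul_right_cancel: "x \<noteq> zero \<Longrightarrow> a \<otimes> x = b \<otimes> x \<Longrightarrow> a = b"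
  by (metis mul_recip mul_assoc mul_one)

lemma mul_le_cancel_left: "x \<noteq> zero \<Longrightarrow> x \<otimes> a \<preceq> x \<otimes> b \<Longrightarrow> a \<preceq> b"
  by (metis mul_add_distrib_left le_def mul_left_cancel)

lemma mul_neq_zero: "a \<noteq> zero \<Longrightarrow> b \<noteq> zero \<Longrightarrow> a \<otimes> b \<noteq> zero"
  by (metis mul_zero mul_left_cancel)

abbreviation upow :: "int \<Rightarrow> 'a" where
  "upow k \<equiv> phi (Some k)"

lemma upow_add: "upow (a + b) = upow a \<otimes> upow b"
  using phi_mul[of "Some a" "Some b"] by (simp add: zmax_mul_def)

lemma upow_0 [simp]: "upow 0 = one"
  by (rule phi_Some_0)

lemma add_upow: "upow a \<oplus> upow b = upow (max a b)"
  using phi_add[of "Some a" "Some b"] by (simp add: zmax_add_def)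

lemma upow_inject: "upow a = upow b \<longleftrightarrow> a = b"
  using inj_phi by (simp add: inj_eq)

lemma upow_le_iff: "upow a \<preceq> upow b \<longleftrightarrow> a \<le> b"
  unfolding le_def add_upow upow_inject by (simp add: max_def)

lemma upow_neq_zero: "upow a \<noteq> zero"
proof
  assume "upow a = zero"
  then have "upow a \<otimes> upow (- a) = zero" by simp
  then show False using upow_add[of a "- a"] zero_not_one by simp
qed

lemma upow_commute: "upow k \<otimes> x = x \<otimes> upow k"
  by (rule phi_central)

definition npow :: "'a \<Rightarrow> nat \<Rightarrow> 'a" where
  "npow x n = ((\<otimes>) x ^^ n) one"

lemma npow_0 [simp]: "npow x 0 = one"
  by (simp add: npow_def)

lemma npow_Suc: "npow x (Suc n) = x \<otimes> npow x n"
  by (simp add: npow_def)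

lemma npow_add: "npow x (a + b) = npow x a \<otimes> npow x b"
  by (induction a) (simp_all add: npow_Suc mul_assoc)

lemma npow_Suc': "npow x (Suc n) = npow x n \<otimes> x"
  using npow_add[of x n 1] by (simp add: npow_Suc)

lemma npow_one [simp]: "npow one n = one"
  by (induction n) (simp_all add: npow_Suc)

lemma npow_neq_zero: "x \<noteq> zero \<Longrightarrow> npow x n \<noteq> zero"
  by (induction n) (simp_all add: npow_Suc mul_neq_zero zero_not_one[symmetric])

lemma npow_le_one: "x \<preceq> one \<Longrightarrow> npow x n \<preceq> one"
  by (induction n) (use mul_le_mul in \<open>fastforce simp: npow_Suc\<close>)+

lemma one_le_npow: "one \<preceq> x \<Longrightarrow> one \<preceq> npow x n"
  by (induction n) (use mul_le_mul in \<open>fastforce simp: npow_Suc\<close>)+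

lemma mul_le_npow_add:
  assumes "y \<preceq> one" and "x \<preceq> one" and "a = 0 \<or> x \<preceq> npow y (a - 1) \<oplus> c"
  shows "y \<otimes> x \<preceq> npow y a \<oplus> c"
proof (cases a)
  case 0
  have "y \<otimes> x \<preceq> one \<otimes> one" using assms(1,2) by (rule mul_le_mul)
  then show ?thesis using 0 le_add1 le_trans by fastforce
next
  case (Suc a')
  then have "x \<preceq> npow y a' \<oplus> c" using assms(3) by simp
  then have "y \<otimes> x \<preceq> y \<otimes> (npow y a' \<oplus> c)" by (rule mul_le_mul_left)
  also have "\<dots> = npow y a \<oplus> y \<otimes> c" by (simp add: Suc npow_Suc mul_add_distrib_left)
  also have "y \<otimes> c \<preceq> c" using mul_le_mul_right[OF assms(1)] by simp
  then have "npow y a \<oplus> y \<otimes> c \<preceq> npow y a \<oplus> c" by (meson add_le le_add1 le_add2 le_trans)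
  finally show ?thesis .
qed

text \<open>The key estimate behind totality: for \<open>y, z \<preceq> 1\<close>, expanding \<open>(y \<oplus> z)\<^sup>a\<^sup>+\<^sup>b\<close>
  every monomial contains \<open>y\<^sup>a\<close> or \<open>z\<^sup>b\<close>, and all other factors are \<open>\<preceq> 1\<close>.\<close>

lemma npow_add_le:
  assumes y: "y \<preceq> one" and z: "z \<preceq> one"
  shows "npow (y \<oplus> z) (a + b) \<preceq> npow y a \<oplus> npow z b"
proof -
  let ?s = "y \<oplus> z"
  have "npow ?s n \<preceq> npow y a \<oplus> npow z b" if "a + b = n" for n a b
    using that
  proof (induction n arbitrary: a b)
    case (Suc n)
    have s: "npow ?s n \<preceq> one" using npow_le_one add_le[OF y z] by blast
    have "a = 0 \<or> npow ?s n \<preceq> npow y (a - 1) \<oplus> npow z b"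
      using Suc.IH[of "a - 1" b] Suc.prems by (cases a) auto
    then have "y \<otimes> npow ?s n \<preceq> npow y a \<oplus> npow z b"
      by (rule mul_le_npow_add[OF y s])
    moreover have "b = 0 \<or> npow ?s n \<preceq> npow z (b - 1) \<oplus> npow y a"
      using Suc.IH[of a "b - 1"] Suc.prems by (cases b) (auto simp: add_commute)
    then have "z \<otimes> npow ?s n \<preceq> npow z b \<oplus> npow y a"
      by (rule mul_le_npow_add[OF z s])
    ultimately show ?case by (simp add: npow_Suc mul_add_distrib_right add_le add_commute)
  qed simp
  then show ?thesis by blast
qed

definition comb :: "int option list \<Rightarrow> 'a list \<Rightarrow> 'a" where
  "comb ks gs = foldr (\<oplus>) (map2 (\<lambda>k g. phi k \<otimes> g) ks gs) zero"

lemma comb_le_iff: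
  assumes "length ks = length gs"
  shows "comb ks gs \<preceq> y \<longleftrightarrow> (\<forall>i<length gs. phi (ks ! i) \<otimes> gs ! i \<preceq> y)"
  using assms
proof (induction ks gs rule: list_induct2)
  case (Cons k ks g gs)
  then show ?case
    by (simp add: comb_def add_le_iff All_less_Suc2)
qed (simp add: comb_def)

lemma le_comb: "length ks = length gs \<Longrightarrow> i < length gs \<Longrightarrow> phi (ks ! i) \<otimes> gs ! i \<preceq> comb ks gs"
  using comb_le_iff[of ks gs "comb ks gs"] by simp

lemma comb_eqI:
  assumes "length ks = length gs" "length ks' = length gs"
    and "\<And>i. i < length gs \<Longrightarrow> phi (ks ! i) \<otimes> gs ! i \<preceq> comb ks' gs"
    and "\<And>i. i < length gs \<Longrightarrow> phi (ks' ! i) \<otimes> gs ! i \<preceq> comb ks gs"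
  shows "comb ks gs = comb ks' gs"
  using assms by (intro le_antisym) (simp_all add: comb_le_iff)

lemma comb_cong:
  assumes "length ks = length gs" "length ks' = length gs"
    and "\<And>i. i < length gs \<Longrightarrow> gs ! i \<noteq> zero \<Longrightarrow> ks ! i = ks' ! i"
  shows "comb ks gs = comb ks' gs"
  using assms by (intro comb_eqI) (metis le_comb mul_zero zero_le)+

lemma comb_raise:
  assumes len: "length ks = length gs"
    and dom: "\<And>i. i < length gs \<Longrightarrow> phi c \<otimes> gs ! i \<preceq> comb ks gs"
  shows "comb (map (\<lambda>k. zmax_add k c) ks) gs = comb ks gs"
proof (rule comb_eqI)
  fix i assume i: "i < length gs"
  have raised: "phi (map (\<lambda>k. zmax_add k c) ks ! i) \<otimes> gs ! i = phi (ks ! i) \<otimes> gs ! i \<oplus> phi c \<otimes> gs ! i"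
    using i len by (simp add: phi_add mul_add_distrib_right)
  show "phi (map (\<lambda>k. zmax_add k c) ks ! i) \<otimes> gs ! i \<preceq> comb ks gs"
    unfolding raised using le_comb[OF len i] dom[OF i] by (rule add_le)
  have "phi (ks ! i) \<otimes> gs ! i \<preceq> phi (map (\<lambda>k. zmax_add k c) ks ! i) \<otimes> gs ! i"
    unfolding raised by (rule le_add1)
  also have "\<dots> \<preceq> comb (map (\<lambda>k. zmax_add k c) ks) gs"
    using i len by (intro le_comb) simp_all
  finally show "phi (ks ! i) \<otimes> gs ! i \<preceq> comb (map (\<lambda>k. zmax_add k c) ks) gs" .
qed (use len in simp_all)

lemma comb_coeffs_at_least:
  assumes len: "length ks = length gs"
    and dom: "\<And>i. i < length gs \<Longrightarrow> upow m \<otimes> gs ! i \<preceq> comb ks gs"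
  obtains ks' where "length ks' = length gs" "comb ks' gs = comb ks gs"
    and "\<And>i. i < length gs \<Longrightarrow> \<exists>k\<ge>m. ks' ! i = Some k \<and>
           (k = m \<or> gs ! i \<noteq> zero \<and> upow k \<otimes> gs ! i \<preceq> comb ks gs)"
proof -
  define ks1 where "ks1 = map (\<lambda>k. zmax_add k (Some m)) ks"
  define ks' where "ks' = map (\<lambda>i. if gs ! i = zero then Some m else ks1 ! i) [0..<length gs]"
  have len': "length ks1 = length gs" "length ks' = length gs"
    using len by (simp_all add: ks1_def ks'_def)
  have raise: "comb ks1 gs = comb ks gs" unfolding ks1_def using len dom by (rule comb_raise)
  have "comb ks' gs = comb ks1 gs" using len' by (intro comb_cong) (simp_all add: ks'_def)
  moreover have "\<exists>k\<ge>m. ks' ! i = Some k \<and> (k = m \<or> gs ! i \<noteq> zero \<and> upow k \<otimes> gs ! i \<preceq> comb ks gs)"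
    if i: "i < length gs" for i
  proof (cases "gs ! i = zero")
    case False
    obtain k where k: "ks1 ! i = Some k" "m \<le> k"
      using i len by (cases "ks ! i") (auto simp: ks1_def zmax_add_def)
    have "upow k \<otimes> gs ! i \<preceq> comb ks gs" using le_comb[OF len'(1) i] k raise by simp
    then show ?thesis using False k i by (auto simp: ks'_def)
  qed (use i in \<open>simp add: ks'_def\<close>)
  ultimately show ?thesis using that len' raise by auto
qed

end

section \<open>Finitely generated semialgebras: bounds and finite intervals\<close>

locale finite_zmax_semialgebra = zmax_semialgebra +
  fixes gs :: "'a list"
  assumes spans: "\<forall>x. \<exists>ks. length ks = length gs \<and> x = comb ks gs"
begin

lemma obtain_coeffs:
  obtains ks where "length ks = length gs" "x = comb ks gs"
  using spans by blast

definition gsum :: 'a where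
  "gsum = comb (replicate (length gs) (Some 0)) gs"

lemma generator_le_gsum: "i < length gs \<Longrightarrow> gs ! i \<preceq> gsum"
  using le_comb[of "replicate (length gs) (Some 0)" gs i] by (simp add: gsum_def)

lemma le_upow_mul_gsum: "\<exists>K. x \<preceq> upow K \<otimes> gsum"
proof -
  obtain ks where ks: "length ks = length gs" "x = comb ks gs" using obtain_coeffs by blast
  define K where "K = Max (insert 0 (the ` set ks))"
  have "phi (ks ! i) \<otimes> gs ! i \<preceq> upow K \<otimes> gsum" if i: "i < length gs" for i
  proof (cases "ks ! i")
    case (Some k)
    then have "k \<in> the ` set ks" using i ks(1) by (metis image_eqI nth_mem option.sel)
    then have "upow k \<preceq> upow K" unfolding K_def upow_le_iff by simp
    then show ?thesis using Some generator_le_gsum[OF i] by (simp add: mul_le_mul)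
  qed (simp add: phi_None)
  then show ?thesis using ks by (auto simp: comb_le_iff)
qed

lemma gsum_neq_zero: "gsum \<noteq> zero"
proof
  assume "gsum = zero"
  then have "one \<preceq> zero" using le_upow_mul_gsum[of one] by auto
  then show False using zero_not_one le_zero_iff by auto
qed

lemma gsum_le_upow: "\<exists>b. gsum \<preceq> upow b"
proof -
  obtain K where "gsum \<otimes> gsum \<preceq> upow K \<otimes> gsum" using le_upow_mul_gsum by blast
  then have "gsum \<otimes> gsum \<preceq> gsum \<otimes> upow K" by (simp add: upow_commute)
  then show ?thesis using mul_le_cancel_left gsum_neq_zero by blast
qed

lemma exists_upow_above: "\<exists>h. x \<preceq> upow h"
proof -
  obtain K where "x \<preceq> upow K \<otimes> gsum" using le_upow_mul_gsum by blast
  moreover obtain b where "gsum \<preceq> upow b" using gsum_le_upow by blast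
  ultimately have "x \<preceq> upow K \<otimes> upow b" by (meson mul_le_mul_left le_trans)
  then show ?thesis by (metis upow_add)
qed

lemma exists_upow_below:
  assumes x: "x \<noteq> zero"
  shows "\<exists>l. upow l \<preceq> x"
proof -
  obtain h where "recip x \<preceq> upow h" using exists_upow_above by blast
  then have "x \<otimes> recip x \<preceq> x \<otimes> upow h" by (rule mul_le_mul_left)
  then have "one \<preceq> x \<otimes> upow h" using x by simp
  then have "upow (- h) \<otimes> one \<preceq> upow (- h) \<otimes> (x \<otimes> upow h)" by (rule mul_le_mul_left)
  also have "upow (- h) \<otimes> (x \<otimes> upow h) = x"
    by (metis upow_add upow_commute add.right_inverse upow_0 mul_assoc one_mul)
  finally show ?thesis by auto
qed

lemma generators_le_upow:
  obtains b where "\<And>i. i < length gs \<Longrightarrow> gs ! i \<preceq> upow b"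
  using gsum_le_upow generator_le_gsum le_trans by blast

lemma upow_le_generators:
  obtains a where "\<And>i. i < length gs \<Longrightarrow> gs ! i \<noteq> zero \<Longrightarrow> upow (- a) \<preceq> gs ! i"
proof -
  define l where "l i = (SOME l. upow l \<preceq> gs ! i)" for i
  have l: "upow (l i) \<preceq> gs ! i" if "gs ! i \<noteq> zero" for i
    unfolding l_def using exists_upow_below[OF that] by (rule someI_ex)
  define a where "a = Max (insert 0 ((\<lambda>i. - l i) ` {..<length gs}))"
  have "upow (- a) \<preceq> gs ! i" if "i < length gs" "gs ! i \<noteq> zero" for i
  proof -
    have "- l i \<le> a" unfolding a_def using that(1) by simp
    then have "upow (- a) \<preceq> upow (l i)" by (simp add: upow_le_iff)
    then show ?thesis using l[OF that(2)] le_trans by blast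
  qed
  then show ?thesis using that by blast
qed

lemma below_or_above_upow: "\<exists>a b. \<forall>x c. x \<preceq> upow (c + b) \<or> upow (c - a) \<preceq> x"
proof -
  obtain a where a: "\<And>i. i < length gs \<Longrightarrow> gs ! i \<noteq> zero \<Longrightarrow> upow (- a) \<preceq> gs ! i"
    using upow_le_generators by blast
  obtain b where b: "\<And>i. i < length gs \<Longrightarrow> gs ! i \<preceq> upow b"
    using generators_le_upow by blast
  have "x \<preceq> upow (c + b) \<or> upow (c - a) \<preceq> x" for x c
  proof -
    obtain ks where ks: "length ks = length gs" "x = comb ks gs" using obtain_coeffs by blast
    show ?thesis
    proof (cases "\<exists>i<length gs. \<exists>k. ks ! i = Some k \<and> gs ! i \<noteq> zero \<and> c < k")
      case True
      then obtain i k where i: "i < length gs" "ks ! i = Some k" "gs ! i \<noteq> zero" "c < k" by blast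
      have "upow (c - a) \<preceq> upow (k + - a)" using i(4) by (simp add: upow_le_iff)
      also have "\<dots> = upow k \<otimes> upow (- a)" by (rule upow_add)
      also have "\<dots> \<preceq> upow k \<otimes> gs ! i" using a i by (simp add: mul_le_mul_left)
      also have "\<dots> \<preceq> x" using le_comb[OF ks(1) i(1)] i(2) ks(2) by simp
      finally show ?thesis ..
    next
      case False
      then have small: "k \<le> c" if "i < length gs" "ks ! i = Some k" "gs ! i \<noteq> zero" for i k
        using that by auto
      have "phi (ks ! i) \<otimes> gs ! i \<preceq> upow c \<otimes> upow b" if i: "i < length gs" for i
      proof (cases "ks ! i")
        case (Some k)
        show ?thesis
        proof (cases "gs ! i = zero")
          case False
          then have "upow k \<preceq> upow c" using small i Some by (simp add: upow_le_iff)
          then show ?thesis using Some b i by (simp add: mul_le_mul)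
        qed simp
      qed (simp add: phi_None)
      then have "x \<preceq> upow c \<otimes> upow b" using ks by (simp add: comb_le_iff)
      then show ?thesis by (simp add: upow_add)
    qed
  qed
  then show ?thesis by blast
qed

text \<open>Every element of an interval with nonzero lower end is a combination whose coefficients
  lie in a finite window: coefficients may be raised to the bottom of the window
  (\<open>comb_coeffs_at_least\<close>), and coefficients above it would push the combination above the
  interval.\<close>

lemma interval_coeffs_finite:
  assumes lo: "lo \<noteq> zero"
  obtains F where "finite F"
    and "\<And>x. lo \<preceq> x \<Longrightarrow> x \<preceq> hi \<Longrightarrow> \<exists>ks. set ks \<subseteq> F \<and> length ks = length gs \<and> x = comb ks gs"
proof -
  obtain a where a: "\<And>i. i < length gs \<Longrightarrow> gs ! i \<noteq> zero \<Longrightarrow> upow (- a) \<preceq> gs ! i"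
    using upow_le_generators by blast
  obtain b where b: "\<And>i. i < length gs \<Longrightarrow> gs ! i \<preceq> upow b"
    using generators_le_upow by blast
  obtain l where l: "upow l \<preceq> lo" using exists_upow_below[OF lo] by blast
  obtain h where h: "hi \<preceq> upow h" using exists_upow_above by blast
  define m where "m = l - b"
  define F where "F = Some ` {m..max m (h + a)}"
  have "\<exists>ks. set ks \<subseteq> F \<and> length ks = length gs \<and> x = comb ks gs"
    if x: "lo \<preceq> x" "x \<preceq> hi" for x
  proof -
    obtain ks where ks: "length ks = length gs" "x = comb ks gs" using obtain_coeffs by blast
    have dom: "upow m \<otimes> gs ! i \<preceq> comb ks gs" if "i < length gs" for i
    proof -
      have "upow m \<otimes> gs ! i \<preceq> upow m \<otimes> upow b" using b[OF that] by (rule mul_le_mul_left)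
      also have "\<dots> = upow l" by (simp add: m_def flip: upow_add)
      finally show ?thesis using l x(1) ks(2) le_trans by blast
    qed
    obtain ks' where ks': "length ks' = length gs" "comb ks' gs = x"
      and coeffs: "\<And>i. i < length gs \<Longrightarrow> \<exists>k\<ge>m. ks' ! i = Some k \<and>
                     (k = m \<or> gs ! i \<noteq> zero \<and> upow k \<otimes> gs ! i \<preceq> x)"
      using comb_coeffs_at_least[OF ks(1) dom] unfolding ks(2)[symmetric] by blast
    have "ks' ! i \<in> F" if i: "i < length gs" for i
    proof -
      obtain k where k: "m \<le> k" "ks' ! i = Some k"
        and top: "k = m \<or> gs ! i \<noteq> zero \<and> upow k \<otimes> gs ! i \<preceq> x"
        using coeffs[OF i] by blast
      have "k \<le> h + a" if g: "gs ! i \<noteq> zero" and above: "upow k \<otimes> gs ! i \<preceq> x"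
      proof -
        have "upow (k + - a) = upow k \<otimes> upow (- a)" by (rule upow_add)
        also have "\<dots> \<preceq> upow k \<otimes> gs ! i" using a[OF i g] by (rule mul_le_mul_left)
        also have "\<dots> \<preceq> upow h" using above x(2) h le_trans by blast
        finally show ?thesis by (simp add: upow_le_iff)
      qed
      then show ?thesis using k top unfolding F_def by auto
    qed
    then have "set ks' \<subseteq> F" using ks'(1) by (auto simp: in_set_conv_nth)
    then show ?thesis using ks' by auto
  qed
  moreover have "finite F" unfolding F_def by simp
  ultimately show ?thesis using that by blast
qed

lemma finite_interval:
  assumes "lo \<noteq> zero"
  shows "finite {x. lo \<preceq> x \<and> x \<preceq> hi}"
proof -
  obtain F where F: "finite F"
    and cover: "\<And>x. lo \<preceq> x \<Longrightarrow> x \<preceq> hi \<Longrightarrow> \<exists>ks. set ks \<subseteq> F \<and> length ks = length gs \<and> x = comb ks gs"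
    using interval_coeffs_finite[OF assms, where hi = hi] by blast
  have "{x. lo \<preceq> x \<and> x \<preceq> hi} \<subseteq> (\<lambda>ks. comb ks gs) ` {ks. set ks \<subseteq> F \<and> length ks = length gs}"
    by (auto dest!: cover)
  moreover have "finite {ks. set ks \<subseteq> F \<and> length ks = length gs}"
    using finite_lists_length_eq[OF F] .
  ultimately show ?thesis by (rule finite_subset[OF _ finite_imageI])
qed

section \<open>The order is total\<close>

text \<open>Otherwise all powers of \<open>y\<close> would stay in a finite interval, so \<open>y\<close> would have finite
  order, which is impossible for \<open>y \<prec> 1\<close>.\<close>

lemma npow_le_upow_minus_one:
  assumes y1: "y \<preceq> one" and yn: "y \<noteq> one"
  shows "\<exists>A. npow y A \<preceq> upow (- 1)"
proof (rule ccontr)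
  assume none: "\<nexists>A. npow y A \<preceq> upow (- 1)"
  obtain a b where ab: "\<forall>x c. x \<preceq> upow (c + b) \<or> upow (c - a) \<preceq> x"
    using below_or_above_upow by blast
  have "upow (- 1 - b - a) \<preceq> npow y A" for A
    using ab[rule_format, of "npow y A" "- 1 - b"] none by auto
  then have "range (npow y) \<subseteq> {x. upow (- 1 - b - a) \<preceq> x \<and> x \<preceq> one}"
    using npow_le_one[OF y1] by blast
  then have "finite (range (npow y))"
    by (rule finite_subset) (rule finite_interval[OF upow_neq_zero])
  then have "\<not> inj (npow y)" using finite_imageD by blast
  then obtain i j where ij: "i < j" "npow y i = npow y j"
    unfolding inj_def by (metis linorder_neqE_nat)
  have yz: "y \<noteq> zero"
  proof
    assume "y = zero"
    then have "npow y 1 = zero" by (simp add: npow_Suc)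
    then show False using none zero_le by metis
  qed
  have "npow y i \<otimes> one = npow y i \<otimes> npow y (j - i)"
    using ij npow_add[of y i "j - i"] by simp
  then have period: "one = npow y (j - i)" by (rule mul_left_cancel[OF npow_neq_zero[OF yz]])
  obtain d where d: "j - i = Suc d" using ij(1) by (cases "j - i") auto
  have "npow y (Suc d) \<preceq> y \<otimes> one"
    unfolding npow_Suc using npow_le_one[OF y1] by (rule mul_le_mul_left)
  then have "one \<preceq> y" using period d by simp
  then show False using y1 yn le_antisym by simp
qed

text \<open>If \<open>x\<close> and \<open>1\<close> were incomparable, \<open>y = x/(x \<oplus> 1)\<close> and \<open>z = 1/(x \<oplus> 1)\<close> would satisfy
  \<open>y, z \<prec> 1 = y \<oplus> z\<close>; raising \<open>y \<oplus> z\<close> to a high power (\<open>npow_add_le\<close>) gives \<open>1 \<preceq> u\<^sup>-\<^sup>1\<close>.\<close>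

lemma le_one_or_one_le: "x \<preceq> one \<or> one \<preceq> x"
proof (rule ccontr)
  assume incomparable: "\<not> (x \<preceq> one \<or> one \<preceq> x)"
  let ?p = "x \<oplus> one"
  have p1: "one \<preceq> ?p" and p2: "x \<preceq> ?p" by (rule le_add2, rule le_add1)
  then have p3: "?p \<noteq> zero" and p4: "?p \<noteq> x" and p5: "?p \<noteq> one"
    using incomparable le_zero_iff zero_not_one by auto
  let ?y = "x \<otimes> recip ?p" and ?z = "recip ?p"
  have yz: "?y \<oplus> ?z = one" using mul_add_distrib_right[of x one ?z] p3 by simp
  have y1: "?y \<preceq> one" using mul_le_mul_right[OF p2, of ?z] p3 by simp
  have z1: "?z \<preceq> one" using mul_le_mul_right[OF p1, of ?z] p3 by simp
  have yn: "?y \<noteq> one"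
  proof
    assume "?y = one"
    then have "x \<otimes> recip ?p \<otimes> ?p = ?p" by simp
    then show False using p3 p4 by (simp add: mul_assoc)
  qed
  have zn: "?z \<noteq> one"
  proof
    assume "?z = one"
    then have "?p \<otimes> ?z = ?p" by simp
    then show False using p3 p5 by simp
  qed
  obtain A where A: "npow ?y A \<preceq> upow (- 1)" using npow_le_upow_minus_one[OF y1 yn] by blast
  obtain B where B: "npow ?z B \<preceq> upow (- 1)" using npow_le_upow_minus_one[OF z1 zn] by blast
  have "one \<preceq> npow ?y A \<oplus> npow ?z B" using npow_add_le[OF y1 z1, of A B] yz by simp
  also have "\<dots> \<preceq> upow (- 1)" using A B by (rule add_le)
  finally have "upow 0 \<preceq> upow (- 1)" by simp
  then show False unfolding upow_le_iff by simp
qed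

lemma le_total: "x \<preceq> y \<or> y \<preceq> x"
proof (cases "x = zero")
  case False
  then have yx: "y \<otimes> recip x \<otimes> x = y" by (simp add: mul_assoc)
  consider "y \<otimes> recip x \<preceq> one" | "one \<preceq> y \<otimes> recip x" using le_one_or_one_le by blast
  then show ?thesis
  proof cases
    case 1
    then have "y \<otimes> recip x \<otimes> x \<preceq> one \<otimes> x" by (rule mul_le_mul_right)
    then show ?thesis using yx by simp
  next
    case 2
    then have "one \<otimes> x \<preceq> y \<otimes> recip x \<otimes> x" by (rule mul_le_mul_right)
    then show ?thesis using yx by simp
  qed
qed simp

section \<open>The nonzero elements form an infinite cyclic group\<close>

lemma finite_has_least: "finite S \<Longrightarrow> S \<noteq> {} \<Longrightarrow> \<exists>w\<in>S. \<forall>z\<in>S. w \<preceq> z"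
proof (induction S rule: finite_ne_induct)
  case (insert x F)
  then obtain w where w: "w \<in> F" "\<forall>z\<in>F. w \<preceq> z" by blast
  show ?case
  proof (cases "x \<preceq> w")
    case True
    then have "\<forall>z\<in>insert x F. x \<preceq> z" using w(2) by (auto intro: le_trans[OF True])
    then show ?thesis by blast
  next
    case False
    then have "\<forall>z\<in>insert x F. w \<preceq> z" using w(2) le_total by auto
    then show ?thesis using w(1) by blast
  qed
qed simp

lemma exists_least_above_one: "\<exists>w. one \<preceq> w \<and> w \<noteq> one \<and> (\<forall>z. one \<preceq> z \<and> z \<noteq> one \<longrightarrow> w \<preceq> z)"
proof -
  let ?S = "{x. one \<preceq> x \<and> x \<noteq> one \<and> x \<preceq> upow 1}"
  have "finite ?S"
    by (rule finite_subset[OF _ finite_interval[OF zero_not_one[symmetric], of "upow 1"]]) blast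
  moreover have "upow 1 \<in> ?S" using upow_le_iff[of 0 1] upow_inject[of 1 0] by auto
  ultimately obtain w where w: "w \<in> ?S" "\<forall>z\<in>?S. w \<preceq> z" using finite_has_least by blast
  have "w \<preceq> z" if "one \<preceq> z" "z \<noteq> one" for z
  proof (cases "z \<preceq> upow 1")
    case False
    then have "upow 1 \<preceq> z" using le_total by blast
    then show ?thesis using w by (auto intro: le_trans)
  qed (use w that in blast)
  then show ?thesis using w(1) by blast
qed

definition unif :: 'a where
  "unif = (SOME w. one \<preceq> w \<and> w \<noteq> one \<and> (\<forall>z. one \<preceq> z \<and> z \<noteq> one \<longrightarrow> w \<preceq> z))"

lemma one_le_unif: "one \<preceq> unif"
  and unif_neq_one: "unif \<noteq> one"
  and unif_least: "one \<preceq> z \<Longrightarrow> z \<noteq> one \<Longrightarrow> unif \<preceq> z"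
  using someI_ex[OF exists_least_above_one] unfolding unif_def by blast+

lemma unif_neq_zero: "unif \<noteq> zero"
proof
  assume "unif = zero"
  then have "one \<preceq> zero" using one_le_unif by simp
  then show False using le_zero_iff zero_not_one by metis
qed

definition zpow :: "int \<Rightarrow> 'a" where
  "zpow j = (if 0 \<le> j then npow unif (nat j) else npow (recip unif) (nat (- j)))"

lemma zpow_0 [simp]: "zpow 0 = one"
  by (simp add: zpow_def)

lemma zpow_succ: "zpow (j + 1) = zpow j \<otimes> unif"
proof (cases "0 \<le> j")
  case True
  then have "nat (j + 1) = Suc (nat j)" by simp
  then show ?thesis using True by (simp add: zpow_def npow_Suc')
next
  case False
  then have "zpow j = npow (recip unif) (nat (- j - 1)) \<otimes> recip unif"
    by (simp add: zpow_def npow_Suc'[symmetric] Suc_nat_eq_nat_zadd1)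
  moreover have "zpow (j + 1) = npow (recip unif) (nat (- j - 1))"
    using False by (cases "j + 1 = 0") (simp_all add: zpow_def)
  ultimately show ?thesis by (simp add: mul_assoc unif_neq_zero)
qed

lemma zpow_pred: "zpow (j - 1) = zpow j \<otimes> recip unif"
  using zpow_succ[of "j - 1"] by (simp add: mul_assoc unif_neq_zero)

lemma zpow_add: "zpow (a + b) = zpow a \<otimes> zpow b"
proof (induction b rule: int_induct[where k = 0])
  case (step1 i)
  then show ?case using zpow_succ[of "a + i"] zpow_succ[of i] by (simp add: add.assoc mul_assoc)
next
  case (step2 i)
  then show ?case using zpow_pred[of "a + i"] zpow_pred[of i] by (simp add: algebra_simps mul_assoc)
qed simp

lemma zpow_1 [simp]: "zpow 1 = unif"
  using zpow_succ[of 0] by simp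

lemma zpow_neq_zero: "zpow j \<noteq> zero"
  unfolding zpow_def using npow_neq_zero unif_neq_zero recip_neq_zero by simp

lemma one_le_zpow: "0 \<le> j \<Longrightarrow> one \<preceq> zpow j"
  unfolding zpow_def using one_le_npow[OF one_le_unif] by simp

lemma zpow_mono: "a \<le> b \<Longrightarrow> zpow a \<preceq> zpow b"
  using mul_le_mul_left[OF one_le_zpow[of "b - a"], of "zpow a"] zpow_add[of a "b - a"] by simp

lemma zpow_inject: "zpow a = zpow b \<longleftrightarrow> a = b"
proof
  assume eq: "zpow a = zpow b"
  show "a = b"
  proof (rule ccontr)
    assume "a \<noteq> b"
    then have "\<exists>c d. c < d \<and> zpow c = zpow d"
      using eq eq[symmetric] by (cases a b rule: linorder_cases) blast+
    then obtain c d where cd: "c < d" "zpow c = zpow d" by blast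
    have "zpow c \<otimes> one = zpow c \<otimes> zpow (d - c)" using cd(2) zpow_add[of c "d - c"] by simp
    then have "one = zpow (d - c)" by (rule mul_left_cancel[OF zpow_neq_zero])
    moreover have "unif \<preceq> zpow (d - c)" using zpow_mono[of 1 "d - c"] cd(1) by simp
    ultimately show False using one_le_unif unif_neq_one le_antisym by simp
  qed
qed simp

lemma one_le_imp_zpow:
  assumes x: "one \<preceq> x"
  shows "\<exists>j. x = zpow j"
proof -
  let ?J = "{j. 0 \<le> j \<and> zpow j \<preceq> x}"
  have "zpow ` ?J \<subseteq> {z. one \<preceq> z \<and> z \<preceq> x}" using one_le_zpow by blast
  then have "finite (zpow ` ?J)" by (rule finite_subset) (rule finite_interval[OF zero_not_one[symmetric]])
  moreover have "inj_on zpow ?J" by (rule inj_onI) (simp add: zpow_inject)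
  ultimately have fin: "finite ?J" by (rule finite_imageD)
  define j where "j = Max ?J"
  have j: "0 \<le> j" "zpow j \<preceq> x"
    using Max_in[OF fin] x unfolding j_def by force+
  have no_succ: "\<not> zpow (j + 1) \<preceq> x"
  proof
    assume "zpow (j + 1) \<preceq> x"
    then have "j + 1 \<in> ?J" using j(1) by simp
    then have "j + 1 \<le> Max ?J" by (rule Max_ge[OF fin])
    then show False unfolding j_def[symmetric] by simp
  qed
  let ?r = "x \<otimes> zpow (- j)"
  have r: "?r \<otimes> zpow j = x" by (simp add: mul_assoc zpow_add[symmetric])
  have "one \<preceq> ?r" using mul_le_mul_right[OF j(2), of "zpow (- j)"] by (simp add: zpow_add[symmetric])
  moreover have "\<not> unif \<preceq> ?r"
  proof
    assume "unif \<preceq> ?r"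
    then have "zpow (1 + j) \<preceq> x" using mul_le_mul_right[of unif ?r "zpow j"] r by (simp add: zpow_add)
    then show False using no_succ by (simp add: add.commute)
  qed
  ultimately have "?r = one" using unif_least by blast
  then show ?thesis using r by auto
qed

lemma zpow_surj:
  assumes x: "x \<noteq> zero"
  shows "\<exists>j. x = zpow j"
proof (cases "one \<preceq> x")
  case False
  then have "x \<preceq> one" using le_total by blast
  then have "recip x \<otimes> x \<preceq> recip x \<otimes> one" by (rule mul_le_mul_left)
  then obtain j where j: "recip x = zpow j" using x one_le_imp_zpow by auto
  have "zpow (- j) \<otimes> recip x \<otimes> x = x" using j by (simp add: mul_assoc zpow_add[symmetric])
  then have "x = zpow (- j)" using x by (simp add: mul_assoc)
  then show ?thesis ..
qed (rule one_le_imp_zpow)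

lemma upow_eq_zpow: "\<exists>n>0. \<forall>k. upow k = zpow (n * k)"
proof -
  obtain n where n: "upow 1 = zpow n" using zpow_surj[OF upow_neq_zero] by blast
  have "0 < n"
  proof (rule ccontr)
    assume "\<not> 0 < n"
    then have "upow 1 \<preceq> upow 0" using zpow_mono[of n 0] n by simp
    then show False unfolding upow_le_iff by simp
  qed
  moreover have "upow k = zpow (n * k)" for k
  proof (induction k rule: int_induct[where k = 0])
    case (step1 i)
    then show ?case using n by (simp add: upow_add zpow_add distrib_left)
  next
    case (step2 i)
    have "upow (i - 1) \<otimes> upow 1 = upow i" by (simp flip: upow_add)
    also have "\<dots> = zpow (n * (i - 1)) \<otimes> zpow n"
      using step2.IH by (simp flip: zpow_add add: algebra_simps)
    finally have "upow (i - 1) \<otimes> upow 1 = zpow (n * (i - 1)) \<otimes> upow 1" using n by simp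
    then show ?case by (rule mul_right_cancel[OF upow_neq_zero])
  qed simp
  ultimately show ?thesis by blast
qed

lemma add_zpow: "zpow a \<oplus> zpow b = zpow (max a b)"
proof (cases "a \<le> b")
  case True
  then show ?thesis using zpow_mono[OF True] by (simp add: le_def max_def)
next
  case False
  then have "zpow b \<preceq> zpow a" by (simp add: zpow_mono)
  then show ?thesis using False by (simp add: le_def max_def add_commute)
qed

definition from_zmax :: "int option \<Rightarrow> 'a" where
  "from_zmax = case_option zero zpow"

lemma bij_from_zmax: "bij from_zmax"
proof (rule bijI)
  show "inj from_zmax"
  proof (rule injI)
    fix p q assume "from_zmax p = from_zmax q"
    then show "p = q"
      using zpow_neq_zero zpow_neq_zero[symmetric] zpow_inject
      by (cases p; cases q) (simp_all add: from_zmax_def)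
  qed
  have "x \<in> range from_zmax" for x
  proof (cases "x = zero")
    case True
    then show ?thesis by (simp add: from_zmax_def image_iff exI[of _ None])
  next
    case False
    then obtain j where "x = zpow j" using zpow_surj by blast
    then show ?thesis by (simp add: from_zmax_def image_iff exI[of _ "Some j"])
  qed
  then show "surj from_zmax" by blast
qed

lemma from_zmax_hom: "is_semiring_hom zmax_add zmax_mul zmax_zero zmax_one (\<oplus>) (\<otimes>) zero one from_zmax"
  unfolding is_semiring_hom_def
proof (intro conjI allI)
  fix p q
  show "from_zmax (zmax_add p q) = from_zmax p \<oplus> from_zmax q"
    by (cases p; cases q) (simp_all add: from_zmax_def zmax_add_def add_zpow)
  show "from_zmax (zmax_mul p q) = from_zmax p \<otimes> from_zmax q"
    by (cases p; cases q) (simp_all add: from_zmax_def zmax_mul_def zpow_add)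
qed (simp_all add: from_zmax_def zmax_zero_def zmax_one_def)

end

lemma semiring_hom_inv:
  assumes "bij f" and "is_semiring_hom add1 mul1 zero1 one1 add2 mul2 zero2 one2 f"
  shows "is_semiring_hom add2 mul2 zero2 one2 add1 mul1 zero1 one1 (inv f)"
proof -
  have f_inv: "f (inv f y) = y" for y using assms(1) by (simp add: bij_is_surj surj_f_inv_f)
  have inv_f: "inv f (f x) = x" for x using assms(1) by (simp add: bij_is_inj)
  show ?thesis using assms(2) unfolding is_semiring_hom_def by (metis f_inv inv_f)
qed

theorem mainTheorem2:
  fixes add mul :: "'d \<Rightarrow> 'd \<Rightarrow> 'd" and zero one :: 'd
    and phi :: "int option \<Rightarrow> 'd"
  assumes "is_zmax_division_semialgebra add mul zero one phi"
    and "is_finite_semialgebra add mul zero phi"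
  shows "\<exists>n::nat. n > 0 \<and> (\<exists>psi :: 'd \<Rightarrow> int option.
           bij psi \<and>
           is_semiring_hom add mul zero one zmax_add zmax_mul zmax_zero zmax_one psi \<and>
           (\<forall>k. psi (phi k) = F_embed n k))"
proof -
  interpret zmax_semialgebra add mul zero one phi
    using assms(1) by unfold_locales
  obtain gs where "\<forall>x. \<exists>ks. length ks = length gs \<and> x = comb ks gs"
    using assms(2) unfolding is_finite_semialgebra_def comb_def by blast
  then interpret finite_zmax_semialgebra add mul zero one phi gs
    by unfold_locales
  obtain n where n: "0 < n" "\<forall>k. upow k = zpow (n * k)" using upow_eq_zpow by blast
  have "phi k = from_zmax (F_embed (nat n) k)" for k
    using n by (cases k) (simp_all add: F_embed_def from_zmax_def phi_None)
  then have "inv from_zmax (phi k) = F_embed (nat n) k" for k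
    using bij_from_zmax by (simp add: bij_is_inj)
  moreover have "bij (inv from_zmax)" using bij_from_zmax by (rule bij_imp_bij_inv)
  moreover have "is_semiring_hom add mul zero one zmax_add zmax_mul zmax_zero zmax_one (inv from_zmax)"
    using semiring_hom_inv[OF bij_from_zmax from_zmax_hom] .
  ultimately show ?thesis using n(1) by (intro exI[of _ "nat n"]) auto
qed

end
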